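(* Let $\varepsilon>0$ and $\lambda<0$. Then the equilibrium point $$e_{2\lambda}=\Big(\frac{a}{\lambda-a_1},\frac{b}{\lambda-a_2},\frac{c}{\lambda-a_3}\Big)$$ of the $\varepsilon$-revised system $$\dot{\mathbf x}=\mathbf x\times\mathbf m(\mathbf x)+\varepsilon[(\mathbf x\times\mathbf m(\mathbf x))\times\mathbf m(\mathbf x)]$$ is Lyapunov stable.
   Context: Fix constants $0<a_1<a_2<a_3$ and $a,b,c\in\mathbb R$. Set $\mathbf m(\mathbf x)=(a_1x^1+a,\ a_2x^2+b,\ a_3x^3+c)$; $\times$ is the cross product in $\mathbb R^3$. *)

theory Defs
  imports "HOL-Analysis.Analysis" "HOL-Analysis.Cross3"
begin

definition mfield :: "real \<Rightarrow> real \<Rightarrow> real \<Rightarrow> real \<Rightarrow> real \<Rightarrow> real \<Rightarrow> real^3 \<Rightarrow> real^3" where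
  "mfield a1 a2 a3 a b c x = vector [a1 * x$1 + a, a2 * x$2 + b, a3 * x$3 + c]"

definition revised_field :: "real \<Rightarrow> real \<Rightarrow> real \<Rightarrow> real \<Rightarrow> real \<Rightarrow> real \<Rightarrow> real \<Rightarrow> real^3 \<Rightarrow> real^3" where
  "revised_field a1 a2 a3 a b c eps x =
     cross3 x (mfield a1 a2 a3 a b c x)
     + eps *\<^sub>R cross3 (cross3 x (mfield a1 a2 a3 a b c x)) (mfield a1 a2 a3 a b c x)"

definition is_solution_on :: "(real^3 \<Rightarrow> real^3) \<Rightarrow> (real \<Rightarrow> real^3) \<Rightarrow> real \<Rightarrow> bool" where
  "is_solution_on f x T \<longleftrightarrow>
     (\<forall>t\<in>{0..<T}. (x has_vector_derivative f (x t)) (at t within {0..<T}))"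

definition lyapunov_stable :: "(real^3 \<Rightarrow> real^3) \<Rightarrow> real^3 \<Rightarrow> bool" where
  "lyapunov_stable f e \<longleftrightarrow>
     f e = 0 \<and>
     (\<forall>r>0. \<exists>d>0. \<forall>x0. dist x0 e < d \<longrightarrow>
        (\<exists>x. x 0 = x0 \<and> (\<forall>T>0. is_solution_on f x T)) \<and>
        (\<forall>x T. T > 0 \<longrightarrow> x 0 = x0 \<longrightarrow> is_solution_on f x T \<longrightarrow>
             (\<forall>t\<in>{0..<T}. dist (x t) e < r)))"

end

theory Submission
  imports Defs
begin

text \<open>
  With \<open>c\<^sub>i = a\<^sub>i - \<lambda> > 0\<close> the weighted distance
  \<open>V(x) = \<Sum>\<^sub>i c\<^sub>i (x\<^sub>i - e\<^sub>i)\<^sup>2\<close> to the equilibrium is a Lyapunov function: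
  the vector \<open>(c\<^sub>i (x\<^sub>i - e\<^sub>i))\<^sub>i\<close> equals \<open>m(x) - \<lambda> x\<close>, and pairing it with the
  right-hand side leaves only \<open>-\<lambda> \<epsilon> x \<bullet> ((x \<times> m) \<times> m) = \<lambda> \<epsilon> |x \<times> m|\<^sup>2\<close>,
  so \<open>V' = 2 \<lambda> \<epsilon> |x \<times> m(x)|\<^sup>2 \<le> 0\<close>. Since \<open>V\<close> is comparable to the squared
  distance, solutions starting close to \<open>e\<close> stay close.

  The field is only locally Lipschitz, so forward solutions are obtained by running
  Picard iteration for the globally Lipschitz field \<open>f \<circ> P\<close>, where \<open>P\<close> is the
  projection onto a ball around \<open>e\<close>. As \<open>P\<close> moves points radially, \<open>V\<close> still
  decreases along \<open>f \<circ> P\<close>; hence its solutions never reach the boundary of the ball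
  and solve the original system.
\<close>

unbundle cross3_syntax

section \<open>Global solutions of Lipschitz equations by Picard iteration\<close>

primrec picard_iterate :: "('a::banach \<Rightarrow> 'a) \<Rightarrow> 'a \<Rightarrow> nat \<Rightarrow> real \<Rightarrow> 'a" where
  "picard_iterate F x0 0 = (\<lambda>t. x0)"
| "picard_iterate F x0 (Suc n) = (\<lambda>t. x0 + integral {0..t} (\<lambda>s. F (picard_iterate F x0 n s)))"

lemma continuous_on_picard_iterate:
  assumes "continuous_on UNIV F"
  shows "continuous_on {0..T} (picard_iterate F x0 n)"
proof (induction n)
  case (Suc n)
  have "(\<lambda>s. F (picard_iterate F x0 n s)) integrable_on {0..T}"
    by (rule integrable_continuous_real) (rule continuous_on_compose2[OF assms Suc.IH], auto)
  then show ?case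
    by (auto intro!: continuous_intros indefinite_integral_continuous_1)
qed simp

lemma integrable_on_picard_iterate:
  assumes "continuous_on UNIV F"
  shows "(\<lambda>s. F (picard_iterate F x0 n s)) integrable_on {0..t}"
  by (rule integrable_continuous_real)
     (rule continuous_on_compose2[OF assms continuous_on_picard_iterate[OF assms]], auto)

lemma has_integral_power_div_fact:
  fixes t :: real
  assumes "0 \<le> t"
  shows "((\<lambda>s. s ^ n / fact n) has_integral t ^ Suc n / fact (Suc n)) {0..t}"
proof -
  have "((\<lambda>s. s ^ Suc n / fact (Suc n)) has_real_derivative s ^ n / fact n) (at s within {0..t})"
    for s :: real
  proof -
    have "((\<lambda>s. s ^ Suc n / fact (Suc n)) has_real_derivative
            of_nat (Suc n) * s ^ n / fact (Suc n)) (at s within {0..t})"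
      by (intro derivative_eq_intros) auto
    then show ?thesis
      by (simp del: of_nat_Suc)
  qed
  from fundamental_theorem_of_calculus[OF assms, of "\<lambda>s. s ^ Suc n / fact (Suc n)"] this
  show ?thesis
    by (simp add: has_real_derivative_iff_has_vector_derivative)
qed

lemma norm_picard_iterate_step_le:
  assumes F: "L-lipschitz_on UNIV F" and M: "\<And>x. norm (F x) \<le> M" and t: "0 \<le> t"
  shows "norm (picard_iterate F x0 (Suc n) t - picard_iterate F x0 n t)
           \<le> M * L ^ n * (t ^ Suc n / fact (Suc n))"
  using t
proof (induction n arbitrary: t)
  case 0
  then show ?case
    using M[of x0] by (simp add: mult_left_mono mult.commute[of M])
next
  case (Suc n)
  let ?P = "picard_iterate F x0"
  have contF: "continuous_on UNIV F"
    using F by (rule lipschitz_on_continuous_on)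
  have bound: "((\<lambda>s. M * L ^ Suc n * (s ^ Suc n / fact (Suc n))) has_integral
                 M * L ^ Suc n * (t ^ Suc (Suc n) / fact (Suc (Suc n)))) {0..t}"
    using has_integral_power_div_fact[OF Suc.prems] by (rule has_integral_mult_right)
  have "?P (Suc (Suc n)) t - ?P (Suc n) t = integral {0..t} (\<lambda>s. F (?P (Suc n) s) - F (?P n s))"
    using picard_iterate.simps(2)[of F x0 "Suc n", THEN fun_cong, of t]
      picard_iterate.simps(2)[of F x0 n, THEN fun_cong, of t]
    by (simp del: picard_iterate.simps add: integral_diff integrable_on_picard_iterate[OF contF])
  also have "norm \<dots> \<le> integral {0..t} (\<lambda>s. M * L ^ Suc n * (s ^ Suc n / fact (Suc n)))"
  proof (rule integral_norm_bound_integral)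
    fix s assume s: "s \<in> {0..t}"
    have "norm (F (?P (Suc n) s) - F (?P n s)) \<le> L * norm (?P (Suc n) s - ?P n s)"
      using lipschitz_onD[OF F] by (simp add: dist_norm)
    also have "\<dots> \<le> L * (M * L ^ n * (s ^ Suc n / fact (Suc n)))"
      using Suc.IH[of s] s lipschitz_on_nonneg[OF F] by (intro mult_left_mono) auto
    finally show "norm (F (?P (Suc n) s) - F (?P n s)) \<le> M * L ^ Suc n * (s ^ Suc n / fact (Suc n))"
      by (simp add: algebra_simps)
  next
    show "(\<lambda>s. F (?P (Suc n) s) - F (?P n s)) integrable_on {0..t}"
      by (intro integrable_diff integrable_on_picard_iterate[OF contF])
  qed (use bound in blast)
  also have "\<dots> = M * L ^ Suc n * (t ^ Suc (Suc n) / fact (Suc (Suc n)))"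
    using bound by (rule integral_unique)
  finally show ?case .
qed

lemma picard_iterate_uniform_limit:
  assumes F: "L-lipschitz_on UNIV F" and M: "\<And>x. norm (F x) \<le> M"
  obtains x where "\<And>T. uniform_limit {0..T} (picard_iterate F x0) x sequentially"
proof
  let ?P = "picard_iterate F x0"
  define d where "d n t = ?P (Suc n) t - ?P n t" for n t
  have P_eq: "?P n t = x0 + (\<Sum>i<n. d i t)" for n t
    by (induction n) (auto simp: d_def simp del: picard_iterate.simps(2))
  fix T :: real
  define B where "B n = M * \<bar>T\<bar> * (inverse (fact n) * (L * \<bar>T\<bar>) ^ n)" for n
  have "summable B"
    unfolding B_def by (intro summable_mult summable_exp)
  moreover have "norm (d n t) \<le> B n" if t: "t \<in> {0..T}" for n t
  proof -
    have "norm (d n t) \<le> M * L ^ n * (t ^ Suc n / fact (Suc n))"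
      unfolding d_def using t by (intro norm_picard_iterate_step_le[OF F M]) auto
    also have "\<dots> \<le> M * L ^ n * (\<bar>T\<bar> ^ Suc n / fact n)"
      using t order_trans[OF norm_ge_zero M] lipschitz_on_nonneg[OF F]
      by (intro mult_left_mono frac_le power_mono fact_mono) auto
    also have "\<dots> = B n"
      by (simp add: B_def field_simps)
    finally show ?thesis .
  qed
  ultimately have "uniform_limit {0..T} (\<lambda>n t. \<Sum>i<n. d i t) (\<lambda>t. \<Sum>i. d i t) sequentially"
    by (intro Weierstrass_m_test) auto
  then show "uniform_limit {0..T} ?P (\<lambda>t. x0 + (\<Sum>i. d i t)) sequentially"
    unfolding P_eq by (intro uniform_limit_intros)
qed

lemma picard_limit_integral_equation:
  assumes F: "L-lipschitz_on UNIV F"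
    and lim: "uniform_limit {0..T} (picard_iterate F x0) x sequentially" and t: "t \<in> {0..T}"
  shows "x t = x0 + integral {0..t} (\<lambda>s. F (x s))"
proof -
  let ?P = "picard_iterate F x0"
  have contF: "continuous_on UNIV F"
    using F by (rule lipschitz_on_continuous_on)
  have "uniform_limit {0..t} ?P x sequentially"
    using lim by (rule uniform_limit_on_subset) (use t in auto)
  then have "uniform_limit {0..t} (\<lambda>n s. F (?P n s)) (F \<circ> x) sequentially"
    using lipschitz_on_uniformly_continuous[OF F] by (rule uniform_limit_compose) auto
  then obtain I J where I: "\<And>n. ((\<lambda>s. F (?P n s)) has_integral I n) {0..t}"
    and J: "((F \<circ> x) has_integral J) {0..t}" and IJ: "I \<longlonglongrightarrow> J"
    by (rule uniform_limit_integral)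
       (auto intro: continuous_on_compose2[OF contF continuous_on_picard_iterate[OF contF]])
  have "(\<lambda>n. ?P (Suc n) t) \<longlonglongrightarrow> x0 + J"
    using IJ integral_unique[OF I] by (simp add: tendsto_add)
  moreover have "(\<lambda>n. ?P (Suc n) t) \<longlonglongrightarrow> x t"
    using tendsto_uniform_limitI[OF lim t] by (rule LIMSEQ_Suc)
  ultimately show ?thesis
    using J by (simp add: LIMSEQ_unique integral_unique o_def)
qed

lemma lipschitz_bounded_ode_solution_exists:
  fixes F :: "'a::banach \<Rightarrow> 'a"
  assumes F: "L-lipschitz_on UNIV F" and M: "\<And>x. norm (F x) \<le> M"
  obtains x where "x 0 = x0"
    and "\<And>T t. t \<in> {0..T} \<Longrightarrow> (x has_vector_derivative F (x t)) (at t within {0..T})"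
proof -
  have contF: "continuous_on UNIV F"
    using F by (rule lipschitz_on_continuous_on)
  obtain x where lim: "\<And>T. uniform_limit {0..T} (picard_iterate F x0) x sequentially"
    using picard_iterate_uniform_limit[OF F M] by blast
  note x_eq = picard_limit_integral_equation[OF F lim]
  show ?thesis
  proof
    show "x 0 = x0"
      using x_eq[of 0 0] by simp
    fix T t :: real assume t: "t \<in> {0..T}"
    have "continuous_on {0..T} x"
      by (rule uniform_limit_theorem[OF _ lim])
         (auto intro: continuous_on_picard_iterate[OF contF] always_eventually)
    then have "continuous_on {0..T} (\<lambda>s. F (x s))"
      by (rule continuous_on_compose2[OF contF]) auto
    then have "((\<lambda>u. x0 + integral {0..u} (\<lambda>s. F (x s))) has_vector_derivative F (x t))
                 (at t within {0..T})"
      using t by (auto intro!: derivative_eq_intros integral_has_vector_derivative)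
    then show "(x has_vector_derivative F (x t)) (at t within {0..T})"
      by (rule has_vector_derivative_transform[rotated 2]) (use t x_eq in auto)
  qed
qed

section \<open>Weighted quadratic Lyapunov functions\<close>

lemma inner_mult_vec: "(w * u) \<bullet> v = (\<Sum>i\<in>UNIV. w $ i * u $ i * v $ i)" for w u v :: "real^'n"
  by (simp add: inner_vec_def)

lemma weighted_quadratic_nonincreasing:
  fixes x :: "real \<Rightarrow> real^'n" and w e :: "real^'n"
  assumes der: "\<And>t. t \<in> {0..<T} \<Longrightarrow> (x has_vector_derivative G (x t)) (at t within {0..<T})"
    and dissipative: "\<And>y. (w * (y - e)) \<bullet> G y \<le> 0" and t: "t \<in> {0..<T}"
  shows "(w * (x t - e)) \<bullet> (x t - e) \<le> (w * (x 0 - e)) \<bullet> (x 0 - e)"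
proof -
  let ?V = "\<lambda>s. (w * (x s - e)) \<bullet> (x s - e)"
  have "(?V has_real_derivative 2 * ((w * (x s - e)) \<bullet> G (x s))) (at s within {0..t})"
    if s: "s \<in> {0..t}" for s
  proof -
    have "(x has_vector_derivative G (x s)) (at s within {0..t})"
      using der[of s] s t by (auto intro: has_vector_derivative_within_subset)
    then have "((\<lambda>s. x s $ i) has_real_derivative G (x s) $ i) (at s within {0..t})" for i
      using bounded_linear.has_vector_derivative[OF bounded_linear_vec_nth]
      by (simp add: has_real_derivative_iff_has_vector_derivative)
    then have "((\<lambda>s. \<Sum>i\<in>UNIV. w $ i * (x s $ i - e $ i) * (x s $ i - e $ i)) has_real_derivative
        (\<Sum>i\<in>UNIV. 2 * (w $ i * (x s $ i - e $ i) * G (x s) $ i))) (at s within {0..t})"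
      by (intro derivative_eq_intros) (auto simp: algebra_simps)
    then show ?thesis
      by (simp add: inner_mult_vec sum_distrib_left)
  qed
  then have "((\<lambda>s. 2 * ((w * (x s - e)) \<bullet> G (x s))) has_integral ?V t - ?V 0) {0..t}"
    using t by (intro fundamental_theorem_of_calculus) (auto simp: has_real_derivative_iff_has_vector_derivative)
  then have "?V t - ?V 0 \<le> 0"
    by (rule has_integral_le[OF _ has_integral_0]) (simp add: dissipative)
  then show ?thesis by simp
qed

lemma weighted_quadratic_bounds:
  fixes w v :: "real^'n"
  assumes "\<And>i. \<alpha> \<le> w $ i" "\<And>i. w $ i \<le> \<beta>"
  shows "\<alpha> * (norm v)\<^sup>2 \<le> (w * v) \<bullet> v" "(w * v) \<bullet> v \<le> \<beta> * (norm v)\<^sup>2"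
proof -
  have norm_sq: "(norm v)\<^sup>2 = (\<Sum>i\<in>UNIV. v $ i * v $ i)"
    by (simp add: power2_norm_eq_inner inner_vec_def)
  show "\<alpha> * (norm v)\<^sup>2 \<le> (w * v) \<bullet> v" "(w * v) \<bullet> v \<le> \<beta> * (norm v)\<^sup>2"
    unfolding norm_sq inner_mult_vec sum_distrib_left mult.assoc
    using assms by (auto intro!: sum_mono mult_right_mono)
qed

lemma dissipative_solution_stays_in_ball:
  fixes x :: "real \<Rightarrow> real^'n" and w e :: "real^'n"
  assumes der: "\<And>t. t \<in> {0..<T} \<Longrightarrow> (x has_vector_derivative G (x t)) (at t within {0..<T})"
    and dissipative: "\<And>y. (w * (y - e)) \<bullet> G y \<le> 0"
    and \<alpha>: "0 < \<alpha>" "\<And>i. \<alpha> \<le> w $ i" and \<beta>: "\<And>i. w $ i \<le> \<beta>"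
    and r: "0 < r" and start: "dist (x 0) e < r * \<alpha> / \<beta>" and t: "t \<in> {0..<T}"
  shows "dist (x t) e < r"
proof -
  have "\<alpha> \<le> \<beta>"
    using \<alpha>(2) \<beta> order_trans by blast
  have "\<alpha> * (dist (x t) e)\<^sup>2 \<le> (w * (x t - e)) \<bullet> (x t - e)"
    using weighted_quadratic_bounds(1)[OF \<alpha>(2) \<beta>] by (simp add: dist_norm)
  also have "\<dots> \<le> (w * (x 0 - e)) \<bullet> (x 0 - e)"
    using der dissipative t by (rule weighted_quadratic_nonincreasing)
  also have "\<dots> \<le> \<beta> * (dist (x 0) e)\<^sup>2"
    using weighted_quadratic_bounds(2)[OF \<alpha>(2) \<beta>] by (simp add: dist_norm)
  also have "\<dots> < \<beta> * (r * \<alpha> / \<beta>)\<^sup>2"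
    using start \<alpha> \<open>\<alpha> \<le> \<beta>\<close> by (intro mult_strict_left_mono power_strict_mono) auto
  also have "\<dots> = \<alpha> * r\<^sup>2 * (\<alpha> / \<beta>)"
    using \<alpha> \<open>\<alpha> \<le> \<beta>\<close> by (simp add: power2_eq_square field_simps)
  also have "\<dots> \<le> \<alpha> * r\<^sup>2"
    using \<alpha> \<open>\<alpha> \<le> \<beta>\<close> by (intro mult_left_le) auto
  finally have "(dist (x t) e)\<^sup>2 < r\<^sup>2"
    using \<alpha> by simp
  then show ?thesis
    using r by (simp add: power_less_imp_less_base)
qed

lemma closest_point_cball_radial:
  fixes e y :: "'a::euclidean_space"
  assumes r: "0 < r"
  obtains s where "0 < s" "closest_point (cball e r) y - e = s *\<^sub>R (y - e)"
proof (cases "y \<in> cball e r")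
  case True
  then show ?thesis
    using that[of 1] by (simp add: closest_point_self)
next
  case False
  define n where "n = dist y e"
  have n: "r < n"
    using False by (simp add: n_def dist_commute)
  define z where "z = e + (r / n) *\<^sub>R (y - e)"
  have "z = closest_point (cball e r) y"
  proof (rule closest_point_unique)
    show "z \<in> cball e r"
      using n r by (simp add: z_def dist_norm n_def)
    have "y - z = (1 - r / n) *\<^sub>R (y - e)"
      by (simp add: z_def algebra_simps)
    moreover have "0 \<le> 1 - r / n"
      using n r by simp
    ultimately have "dist y z = (1 - r / n) * n"
      by (simp add: dist_norm n_def)
    also have "\<dots> = n - r"
      using n r by (simp add: field_simps)
    finally have "dist y z = n - r" .
    then show "\<forall>u\<in>cball e r. dist y z \<le> dist y u"
      using dist_triangle[of y e] by (smt (verit, best) mem_cball n_def dist_commute)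
  qed auto
  then have "closest_point (cball e r) y - e = (r / n) *\<^sub>R (y - e)"
    unfolding z_def by (metis add_diff_cancel_left')
  then show ?thesis
    using that[of "r / n"] n r by simp
qed

lemma dissipative_forward_solution_exists:
  fixes f :: "real^'n \<Rightarrow> real^'n" and w e :: "real^'n"
  assumes equilibrium: "f e = 0" and dissipative: "\<And>y. (w * (y - e)) \<bullet> f y \<le> 0"
    and L: "L-lipschitz_on (cball e r) f"
    and \<alpha>: "0 < \<alpha>" "\<And>i. \<alpha> \<le> w $ i" and \<beta>: "\<And>i. w $ i \<le> \<beta>"
    and r: "0 < r" and start: "dist x0 e < r * \<alpha> / \<beta>"
  obtains x where "x 0 = x0"
    and "\<And>T t. t \<in> {0..<T} \<Longrightarrow> (x has_vector_derivative f (x t)) (at t within {0..<T})"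
proof -
  define p where "p = closest_point (cball e r)"
  have p_in: "p y \<in> cball e r" for y
    unfolding p_def using r by (intro closest_point_in_set) auto
  define F where "F = f \<circ> p"
  have "1-lipschitz_on UNIV p"
    unfolding p_def by (rule lipschitz_onI) (use r in \<open>auto intro!: closest_point_lipschitz\<close>)
  then have F_lipschitz: "(L * 1)-lipschitz_on UNIV F"
    unfolding F_def by (rule lipschitz_on_compose) (rule lipschitz_on_subset[OF L], use p_in in auto)
  have F_bounded: "norm (F y) \<le> L * r" for y
  proof -
    have "norm (F y) = dist (f (p y)) (f e)"
      by (simp add: F_def dist_norm equilibrium)
    also have "\<dots> \<le> L * dist (p y) e"
      using lipschitz_onD[OF L p_in] r by simp
    also have "\<dots> \<le> L * r"
      using p_in[of y] lipschitz_on_nonneg[OF L] by (intro mult_left_mono) (auto simp: dist_commute)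
    finally show ?thesis .
  qed
  have F_dissipative: "(w * (y - e)) \<bullet> F y \<le> 0" for y
  proof -
    obtain s where s: "0 < s" "p y - e = s *\<^sub>R (y - e)"
      using closest_point_cball_radial[OF r] unfolding p_def by blast
    have "s * ((w * (y - e)) \<bullet> F y) = (w * (p y - e)) \<bullet> f (p y)"
      by (simp add: s(2) F_def vec_eq_iff inner_mult_vec sum_distrib_left algebra_simps)
    also have "\<dots> \<le> 0"
      by (rule dissipative)
    finally show ?thesis
      using s(1) by (simp add: mult_le_0_iff)
  qed
  obtain x where x0: "x 0 = x0"
    and x_der: "\<And>T t. t \<in> {0..T} \<Longrightarrow> (x has_vector_derivative F (x t)) (at t within {0..T})"
    using lipschitz_bounded_ode_solution_exists[OF F_lipschitz F_bounded] by blast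
  show ?thesis
  proof (rule that[of x, OF x0])
    fix T t :: real assume t: "t \<in> {0..<T}"
    have F_der: "(x has_vector_derivative F (x s)) (at s within {0..<T})" if "s \<in> {0..<T}" for s
      using x_der[of s T] that by (auto intro: has_vector_derivative_within_subset)
    have "dist (x t) e < r"
      using F_der F_dissipative \<alpha> \<beta> r start t unfolding x0[symmetric]
      by (rule dissipative_solution_stays_in_ball)
    then have "F (x t) = f (x t)"
      by (simp add: F_def p_def closest_point_self dist_commute)
    then show "(x has_vector_derivative f (x t)) (at t within {0..<T})"
      using F_der[OF t] by simp
  qed
qed

lemma lyapunov_stable_weighted_quadratic:
  fixes f :: "real^3 \<Rightarrow> real^3" and w e :: "real^3"
  assumes equilibrium: "f e = 0" and weights: "\<And>i. 0 < w $ i"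
    and dissipative: "\<And>y. (w * (y - e)) \<bullet> f y \<le> 0"
    and lipschitz: "\<And>K. compact K \<Longrightarrow> \<exists>L. L-lipschitz_on K f"
  shows "lyapunov_stable f e"
proof -
  define \<alpha> where "\<alpha> = Min (range (vec_nth w))"
  define \<beta> where "\<beta> = Max (range (vec_nth w))"
  have \<alpha>: "0 < \<alpha>" "\<And>i. \<alpha> \<le> w $ i" and \<beta>: "\<And>i. w $ i \<le> \<beta>"
    using weights Min_in[of "range (vec_nth w)"] by (auto simp: \<alpha>_def \<beta>_def)
  show ?thesis
    unfolding lyapunov_stable_def
  proof (intro conjI allI impI equilibrium)
    fix r :: real assume r: "0 < r"
    obtain L where L: "L-lipschitz_on (cball e r) f"
      using lipschitz[of "cball e r"] by auto
    have "0 < \<beta>"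
      using \<alpha> \<beta>[of 1] by (metis order.strict_trans2)
    then have "0 < r * \<alpha> / \<beta>"
      using r \<alpha> by simp
    then show "\<exists>d>0. \<forall>x0. dist x0 e < d \<longrightarrow>
        (\<exists>x. x 0 = x0 \<and> (\<forall>T>0. is_solution_on f x T)) \<and>
        (\<forall>x T. 0 < T \<longrightarrow> x 0 = x0 \<longrightarrow> is_solution_on f x T \<longrightarrow> (\<forall>t\<in>{0..<T}. dist (x t) e < r))"
    proof (intro exI[of _ "r * \<alpha> / \<beta>"] conjI allI impI ballI)
      fix x0 assume start: "dist x0 e < r * \<alpha> / \<beta>"
      show "\<exists>x. x 0 = x0 \<and> (\<forall>T>0. is_solution_on f x T)"
        using dissipative_forward_solution_exists[OF equilibrium dissipative L \<alpha> \<beta> r start]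
        unfolding is_solution_on_def by metis
      fix x T t assume "x 0 = x0" "is_solution_on f x T" "t \<in> {0..<T}"
      then show "dist (x t) e < r"
        using dissipative_solution_stays_in_ball[OF _ dissipative \<alpha> \<beta> r] start
        unfolding is_solution_on_def by blast
    qed
  qed
qed

section \<open>The revised system\<close>

lemma (in bounded_bilinear) lipschitz_on_compact_prod:
  assumes "compact U" and f: "Lf-lipschitz_on U f" and g: "Lg-lipschitz_on U g"
  obtains C where "C-lipschitz_on U (\<lambda>x. prod (f x) (g x))"
proof -
  have "bounded (f ` U)" "bounded (g ` U)"
    using assms by (auto intro!: compact_imp_bounded compact_continuous_image lipschitz_on_continuous_on)
  then obtain Bf Bg where Bf: "0 < Bf" "\<And>x. x \<in> U \<Longrightarrow> norm (f x) \<le> Bf"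
    and Bg: "0 < Bg" "\<And>x. x \<in> U \<Longrightarrow> norm (g x) \<le> Bg"
    by (auto simp: bounded_pos)
  obtain K where K: "0 < K" "\<And>a b. norm (prod a b) \<le> norm a * norm b * K"
    using pos_bounded by blast
  have "(K * (Lf * Bg + Bf * Lg))-lipschitz_on U (\<lambda>x. prod (f x) (g x))"
  proof (rule lipschitz_onI)
    fix x y assume xy: "x \<in> U" "y \<in> U"
    have "prod (f x) (g x) - prod (f y) (g y) = prod (f x - f y) (g x) + prod (f y) (g x - g y)"
      by (simp add: diff_left diff_right)
    then have "dist (prod (f x) (g x)) (prod (f y) (g y))
               \<le> norm (f x - f y) * norm (g x) * K + norm (f y) * norm (g x - g y) * K"
      by (metis K(2) add_mono dist_norm norm_triangle_le)
    also have "\<dots> \<le> (Lf * dist x y) * Bg * K + Bf * (Lg * dist x y) * K"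
      using lipschitz_onD[OF f xy] lipschitz_onD[OF g xy] Bf Bg xy K(1)
        lipschitz_on_nonneg[OF f] lipschitz_on_nonneg[OF g]
      by (intro add_mono mult_right_mono mult_mono) (auto simp: dist_norm)
    finally show "dist (prod (f x) (g x)) (prod (f y) (g y)) \<le> K * (Lf * Bg + Bf * Lg) * dist x y"
      by (simp add: algebra_simps)
  qed (use K Bf Bg lipschitz_on_nonneg[OF f] lipschitz_on_nonneg[OF g] in auto)
  then show ?thesis ..
qed

lemma lipschitz_on_mfield:
  "(\<bar>a1\<bar> + \<bar>a2\<bar> + \<bar>a3\<bar>)-lipschitz_on U (mfield a1 a2 a3 a b c)"
proof (rule lipschitz_onI)
  fix y z :: "real^3"
  have "dist (mfield a1 a2 a3 a b c y) (mfield a1 a2 a3 a b c z)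
     \<le> (\<Sum>i\<in>UNIV. \<bar>(mfield a1 a2 a3 a b c y - mfield a1 a2 a3 a b c z) $ i\<bar>)"
    unfolding dist_norm by (rule norm_le_l1_cart)
  also have "\<dots> = \<bar>a1\<bar> * \<bar>(y - z) $ 1\<bar> + \<bar>a2\<bar> * \<bar>(y - z) $ 2\<bar> + \<bar>a3\<bar> * \<bar>(y - z) $ 3\<bar>"
    by (simp add: sum_3 mfield_def flip: abs_mult right_diff_distrib)
  also have "\<dots> \<le> (\<bar>a1\<bar> + \<bar>a2\<bar> + \<bar>a3\<bar>) * dist y z"
    using component_le_norm_cart[of "y - z"]
    by (simp add: dist_norm distrib_right add_mono mult_left_mono)
  finally show "dist (mfield a1 a2 a3 a b c y) (mfield a1 a2 a3 a b c z)
                \<le> (\<bar>a1\<bar> + \<bar>a2\<bar> + \<bar>a3\<bar>) * dist y z" .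
qed simp

lemma lipschitz_on_compact_revised_field:
  assumes "compact K"
  obtains L where "L-lipschitz_on K (revised_field a1 a2 a3 a b c eps)"
proof -
  interpret cross: bounded_bilinear cross3
    using bilinear_cross bilinear_conv_bounded_bilinear by blast
  let ?m = "mfield a1 a2 a3 a b c"
  obtain C1 where C1: "C1-lipschitz_on K (\<lambda>x. x \<times> ?m x)"
    using cross.lipschitz_on_compact_prod[OF assms lipschitz_on_id lipschitz_on_mfield] .
  obtain C2 where C2: "C2-lipschitz_on K (\<lambda>x. (x \<times> ?m x) \<times> ?m x)"
    using cross.lipschitz_on_compact_prod[OF assms C1 lipschitz_on_mfield] .
  have "(C1 + \<bar>eps\<bar> * C2)-lipschitz_on K (revised_field a1 a2 a3 a b c eps)"
    unfolding revised_field_def by (intro lipschitz_on_add lipschitz_on_cmult C1 C2)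
  then show ?thesis ..
qed

lemma inner_revised_cross_field:
  fixes x m :: "real^3"
  shows "(m - l *\<^sub>R x) \<bullet> (x \<times> m + \<epsilon> *\<^sub>R ((x \<times> m) \<times> m)) = l * \<epsilon> * (norm (x \<times> m))\<^sup>2"
proof -
  have "x \<bullet> ((x \<times> m) \<times> m) = - (norm (x \<times> m))\<^sup>2"
    by (simp add: power2_norm_eq_inner cross3_simps)
  then show ?thesis
    by (simp add: inner_diff_left inner_add_right dot_cross_self algebra_simps)
qed

theorem theorem6p5:
  fixes a1 a2 a3 a b c eps lam :: real
  assumes "0 < a1" and "a1 < a2" and "a2 < a3"
    and "eps > 0" and "lam < 0"
  shows "lyapunov_stable (revised_field a1 a2 a3 a b c eps)
           (vector [a / (lam - a1), b / (lam - a2), c / (lam - a3)])"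
proof -
  let ?m = "mfield a1 a2 a3 a b c"
  define e :: "real^3" where "e = vector [a / (lam - a1), b / (lam - a2), c / (lam - a3)]"
  define w :: "real^3" where "w = vector [a1 - lam, a2 - lam, a3 - lam]"
  have weights: "\<forall>i. 0 < w $ i"
    using assms by (simp add: forall_3 w_def)
  have "lam - a1 \<noteq> 0" "lam - a2 \<noteq> 0" "lam - a3 \<noteq> 0"
    using assms by auto
  then have shift: "w * (y - e) = ?m y - lam *\<^sub>R y" for y
    by (simp add: vec_eq_iff forall_3 mfield_def w_def e_def field_simps)
  have "?m e = lam *\<^sub>R e"
    using shift[of e] by simp
  show ?thesis
    unfolding e_def[symmetric]
  proof (rule lyapunov_stable_weighted_quadratic[OF _ weights[rule_format]])
    show "revised_field a1 a2 a3 a b c eps e = 0"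
      by (simp add: revised_field_def \<open>?m e = lam *\<^sub>R e\<close> cross_mult_right)
    show "(w * (y - e)) \<bullet> revised_field a1 a2 a3 a b c eps y \<le> 0" for y
      using assms by (simp add: shift revised_field_def
          inner_revised_cross_field mult_nonpos_nonneg)
    show "\<exists>L. L-lipschitz_on K (revised_field a1 a2 a3 a b c eps)" if "compact K" for K
      using lipschitz_on_compact_revised_field[OF that] by metis
  qed
qed

end
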